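(* Let $n\geqslant0$, $q=3^{2n+1}$, $A=\{\alpha-\alpha^{3^{n+1}}:\alpha\in\mathbb{F}_q\}$, and let $T\subseteq\mathbb{F}_q^\times$. Then $$\dim_{\mathbb{F}_3}\Big(\bigcap_{t\in T}tA\Big)+\dim_{\mathbb{F}_3}\big(\mathrm{span}_{\mathbb{F}_3}(T^{-1})\big)=2n+1.$$
   Context: For $t\in\mathbb{F}_q$, $tA=\{ta:a\in A\}$, an $\mathbb{F}_3$-subspace of $\mathbb{F}_q$; $T^{-1}=\{t^{-1}:t\in T\}$ and $\mathrm{span}_{\mathbb{F}_3}(T^{-1})$ is the $\mathbb{F}_3$-subspace it spans. An intersection over an empty index set is $\mathbb{F}_q$. *)

theory Defs
  imports Main
begin

definition F3_scalars :: "'a::field set" where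
  "F3_scalars = of_nat ` {0, 1, 2}"

definition f3_span :: "'a::field set \<Rightarrow> 'a set" where
  "f3_span S = {(\<Sum>s\<in>S'. c s * s) | S' c. finite S' \<and> S' \<subseteq> S \<and> (\<forall>s. c s \<in> F3_scalars)}"

definition f3_indep :: "'a::field set \<Rightarrow> bool" where
  "f3_indep B \<longleftrightarrow> (\<forall>S' c. finite S' \<and> S' \<subseteq> B \<and> (\<forall>s. c s \<in> F3_scalars) \<and>
       (\<Sum>s\<in>S'. c s * s) = 0 \<longrightarrow> (\<forall>s\<in>S'. c s = 0))"

definition f3_dim :: "'a::field set \<Rightarrow> nat" where
  "f3_dim V = (THE k. \<exists>B. finite B \<and> B \<subseteq> V \<and> f3_indep B \<and> f3_span B = V \<and> card B = k)"

end

theory Submission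
  imports Defs "HOL-Number_Theory.Residues" "HOL-Computational_Algebra.Polynomial" "HOL-Library.FuncSet"
begin

text \<open>
  Put \<open>m = 2n + 1\<close> and let \<open>Tr x = x + x^3 + ... + x^(3^(m-1))\<close> be the trace of \<open>F_q\<close>
  over \<open>F_3\<close>. The additive map \<open>\<alpha> \<mapsto> \<alpha> - \<alpha>^(3^(n+1))\<close> has kernel \<open>F_3\<close>, since
  applying the Frobenius power \<open>3^(n+1)\<close> twice gives \<open>3^(m+1)\<close>, i.e. cubing. Its image
  lies in the kernel of \<open>Tr\<close>, which is Frobenius invariant, and has index 3, so \<open>A = ker Tr\<close>.
  Hence \<open>x \<in> tA\<close> iff \<open>Tr (x t\<^sup>-\<^sup>1) = 0\<close>: the intersection is the orthogonal complement of
  \<open>span T\<^sup>-\<^sup>1\<close> for the trace form \<open>(x, y) \<mapsto> Tr (x y)\<close>. This form is nondegenerate, as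
  \<open>Tr\<close> is a nonzero polynomial of degree \<open>3^(m-1) < q\<close>, so a subspace and its orthogonal
  complement have dimensions adding up to \<open>m\<close>.
\<close>

section \<open>\<open>F_3\<close>-linear algebra in a field\<close>

lemma F3_scalars_eq: "F3_scalars = {0, 1, 2::'a::field}"
  unfolding F3_scalars_def by auto

text \<open>Closure under \<open>F_3\<close>-scalars is automatic, as \<open>2 x = x + x\<close>.\<close>
definition f3_subspace :: "'a::field set \<Rightarrow> bool" where
  "f3_subspace V \<longleftrightarrow> 0 \<in> V \<and> (\<forall>x\<in>V. \<forall>y\<in>V. x + y \<in> V)"

lemma f3_subspace_UNIV: "f3_subspace UNIV"
  by (simp add: f3_subspace_def)

lemma f3_subspace_scale:
  assumes "f3_subspace V" "c \<in> F3_scalars" "x \<in> V"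
  shows "c * x \<in> V"
proof -
  have "0 \<in> V" "x + x \<in> V"
    using assms(1,3) unfolding f3_subspace_def by blast+
  moreover have "c = 0 \<or> c = 1 \<or> c = 2"
    using assms(2) by (simp add: F3_scalars_eq)
  ultimately show ?thesis
    using assms(3) by (auto simp flip: mult_2)
qed

lemma f3_subspace_sum:
  assumes "f3_subspace V" "finite I" "\<And>i. i \<in> I \<Longrightarrow> f i \<in> V"
  shows "sum f I \<in> V"
  using assms(2,3) by (induction I rule: finite_induct) (use assms(1) in \<open>auto simp: f3_subspace_def\<close>)

lemma sum_restrict_coeffs:
  assumes "finite S" "S' \<subseteq> S"
  shows "(\<Sum>s\<in>S. (if s \<in> S' then c s else 0) * s) = (\<Sum>s\<in>S'. c s * (s::'a::field))"
proof -
  have "(\<Sum>s\<in>S. (if s \<in> S' then c s else 0) * s) = (\<Sum>s\<in>S. if s \<in> S' then c s * s else 0)"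
    by (intro sum.cong) auto
  also have "\<dots> = (\<Sum>s\<in>S \<inter> S'. c s * s)"
    using assms(1) by (rule sum.inter_restrict[symmetric])
  finally show ?thesis
    using assms(2) by (simp add: Int_absorb1)
qed

lemma f3_span_sumI:
  assumes "finite S" "\<forall>s. c s \<in> F3_scalars"
  shows "(\<Sum>s\<in>S. c s * s) \<in> f3_span S"
  using assms unfolding f3_span_def by auto

lemma f3_span_sumE:
  assumes "finite S" "x \<in> f3_span S"
  obtains c where "x = (\<Sum>s\<in>S. c s * s)" "\<forall>s. c s \<in> F3_scalars"
proof -
  obtain S' c where x: "x = (\<Sum>s\<in>S'. c s * s)" and "S' \<subseteq> S" and c: "\<forall>s. c s \<in> F3_scalars"
    using assms(2) unfolding f3_span_def by blast
  define c' where "c' s = (if s \<in> S' then c s else 0)" for s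
  have "x = (\<Sum>s\<in>S. c' s * s)"
    unfolding x c'_def using sum_restrict_coeffs[OF assms(1) \<open>S' \<subseteq> S\<close>] by simp
  moreover have "\<forall>s. c' s \<in> F3_scalars"
    using c by (simp add: c'_def F3_scalars_eq)
  ultimately show ?thesis
    using that by blast
qed

lemma f3_indep_finite_iff:
  assumes "finite B"
  shows "f3_indep B \<longleftrightarrow>
    (\<forall>c. (\<forall>s. c s \<in> F3_scalars) \<and> (\<Sum>s\<in>B. c s * s) = 0 \<longrightarrow> (\<forall>s\<in>B. c s = 0))"
proof
  assume "f3_indep B"
  then show "\<forall>c. (\<forall>s. c s \<in> F3_scalars) \<and> (\<Sum>s\<in>B. c s * s) = 0 \<longrightarrow> (\<forall>s\<in>B. c s = 0)"
    using assms unfolding f3_indep_def by blast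
next
  assume indep: "\<forall>c. (\<forall>s. c s \<in> F3_scalars) \<and> (\<Sum>s\<in>B. c s * s) = 0 \<longrightarrow> (\<forall>s\<in>B. c s = 0)"
  show "f3_indep B"
    unfolding f3_indep_def
  proof (intro allI impI ballI)
    fix S' c s
    assume H: "finite S' \<and> S' \<subseteq> B \<and> (\<forall>s. c s \<in> F3_scalars) \<and> (\<Sum>s\<in>S'. c s * s) = 0"
      and "s \<in> S'"
    define c' where "c' s = (if s \<in> S' then c s else 0)" for s
    have "(\<Sum>s\<in>B. c' s * s) = 0"
      using sum_restrict_coeffs[OF assms, of S' c] H unfolding c'_def by simp
    moreover have "\<forall>s. c' s \<in> F3_scalars"
      using H by (simp add: c'_def F3_scalars_eq)
    ultimately have "\<forall>s\<in>B. c' s = 0"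
      using indep by blast
    then show "c s = 0"
      using H \<open>s \<in> S'\<close> unfolding c'_def by (metis subsetD)
  qed
qed

lemma f3_indep_empty: "f3_indep {}"
  unfolding f3_indep_def by simp

lemma f3_indep_subset: "f3_indep B' \<Longrightarrow> B \<subseteq> B' \<Longrightarrow> f3_indep B"
  unfolding f3_indep_def by (meson order_trans)

lemma f3_span_empty: "f3_span {} = {0::'a::field}"
proof (intro equalityI subsetI)
  show "x \<in> {0}" if "x \<in> f3_span {}" for x :: 'a
    using that by (auto elim: f3_span_sumE[OF finite.emptyI])
  show "x \<in> f3_span {}" if "x \<in> {0}" for x :: 'a
    using that f3_span_sumI[of "{}" "\<lambda>_. 0"] by (simp add: F3_scalars_eq)
qed

lemma subset_f3_span:
  assumes "finite S"
  shows "S \<subseteq> f3_span S"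
proof
  fix x
  assume "x \<in> S"
  define c :: "'a \<Rightarrow> 'a" where "c s = (if s = x then 1 else 0)" for s
  have "(\<Sum>s\<in>S. c s * s) = (\<Sum>s\<in>S. if s = x then s else 0)"
    unfolding c_def by (intro sum.cong) auto
  also have "\<dots> = x"
    using assms \<open>x \<in> S\<close> by simp
  finally show "x \<in> f3_span S"
    using f3_span_sumI[OF assms, of c] by (simp add: c_def F3_scalars_eq)
qed

lemma f3_span_insert:
  assumes "finite B" "v \<notin> B"
  shows "f3_span (insert v B) = {c * v + x | c x. c \<in> F3_scalars \<and> x \<in> f3_span (B::'a::field set)}"
proof (intro equalityI subsetI)
  fix y
  assume "y \<in> f3_span (insert v B)"
  then obtain c where "y = (\<Sum>s\<in>insert v B. c s * s)" and c: "\<forall>s. c s \<in> F3_scalars"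
    using assms(1) by (blast elim: f3_span_sumE[OF finite.insertI])
  then have "y = c v * v + (\<Sum>s\<in>B. c s * s)"
    using assms by simp
  moreover have "(\<Sum>s\<in>B. c s * s) \<in> f3_span B"
    using assms c by (intro f3_span_sumI)
  ultimately show "y \<in> {c * v + x | c x. c \<in> F3_scalars \<and> x \<in> f3_span B}"
    using c by blast
next
  fix y
  assume "y \<in> {c * v + x | c x. c \<in> F3_scalars \<and> x \<in> f3_span B}"
  then obtain c d where y: "y = c * v + (\<Sum>s\<in>B. d s * s)" and c: "c \<in> F3_scalars"
    and d: "\<forall>s. d s \<in> F3_scalars"
    using assms(1) by (blast elim: f3_span_sumE)
  have "y = (\<Sum>s\<in>insert v B. (d(v := c)) s * s)"
    unfolding y using assms by (auto intro: sum.cong)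
  also have "\<dots> \<in> f3_span (insert v B)"
    using assms c d by (intro f3_span_sumI) auto
  finally show "y \<in> f3_span (insert v B)" .
qed

lemma f3_span_subset:
  assumes "f3_subspace V" "finite S" "S \<subseteq> V"
  shows "f3_span S \<subseteq> V"
proof
  fix x
  assume "x \<in> f3_span S"
  then obtain c where "x = (\<Sum>s\<in>S. c s * s)" "\<forall>s. c s \<in> F3_scalars"
    using assms(2) by (blast elim: f3_span_sumE)
  then show "x \<in> V"
    using assms by (auto intro!: f3_subspace_sum f3_subspace_scale)
qed

section \<open>Fields of characteristic 3\<close>

definition f3_trace :: "nat \<Rightarrow> 'a::field \<Rightarrow> 'a" where
  "f3_trace m x = (\<Sum>i<m. x ^ 3 ^ i)"

definition trace_perp :: "nat \<Rightarrow> 'a::field set \<Rightarrow> 'a set" where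
  "trace_perp m S = {x. \<forall>s\<in>S. f3_trace m (x * s) = 0}"

lemma f3_trace_zero [simp]: "f3_trace m 0 = 0"
  by (simp add: f3_trace_def power_0_left)

context
  assumes char3: "CHAR('a::field) = 3"
begin

lemma three_eq_zero: "(3::'a) = 0"
  by (metis char3 of_nat_CHAR of_nat_numeral)

lemma add_power_3_power: "(x + y) ^ 3 ^ k = x ^ 3 ^ k + (y::'a) ^ 3 ^ k"
  by (rule freshmans_dream') (simp_all add: char3)

lemma sum_power_3_power: "(\<Sum>i\<in>I. f i) ^ 3 ^ k = (\<Sum>i\<in>I. (f i :: 'a) ^ 3 ^ k)"
  by (rule freshmans_dream_sum') (simp_all add: char3)

lemma F3_scalars_char3_eq: "F3_scalars = {0, 1, -1::'a}"
proof -
  have "(2::'a) + 1 = 0"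
    using three_eq_zero by simp
  then have "(2::'a) = -1"
    by (simp add: eq_neg_iff_add_eq_0)
  then show ?thesis
    unfolding F3_scalars_eq by (rule arg_cong)
qed

lemma F3_scalars_iff: "c \<in> F3_scalars \<longleftrightarrow> (c::'a) ^ 3 = c"
proof -
  have "c ^ 3 = c \<longleftrightarrow> c * (c - 1) * (c + 1) = 0"
    by (simp add: power3_eq_cube algebra_simps)
  also have "\<dots> \<longleftrightarrow> c \<in> {0, 1, -1}"
    by (simp add: eq_neg_iff_add_eq_0)
  finally show ?thesis
    by (simp add: F3_scalars_char3_eq)
qed

lemma F3_scalars_add: "a \<in> F3_scalars \<Longrightarrow> b \<in> F3_scalars \<Longrightarrow> (a + b :: 'a) \<in> F3_scalars"
  using add_power_3_power[of a b 1] by (simp add: F3_scalars_iff)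

lemma F3_scalars_mult: "a \<in> F3_scalars \<Longrightarrow> b \<in> F3_scalars \<Longrightarrow> (a * b :: 'a) \<in> F3_scalars"
  by (simp add: F3_scalars_iff power_mult_distrib)

lemma F3_scalars_uminus: "a \<in> F3_scalars \<Longrightarrow> (- a :: 'a) \<in> F3_scalars"
  by (simp add: F3_scalars_iff)

lemma F3_scalars_inverse: "a \<in> F3_scalars \<Longrightarrow> (inverse a :: 'a) \<in> F3_scalars"
  by (simp add: F3_scalars_iff power_inverse)

lemma F3_scalars_diff: "a \<in> F3_scalars \<Longrightarrow> b \<in> F3_scalars \<Longrightarrow> (a - b :: 'a) \<in> F3_scalars"
  using F3_scalars_add F3_scalars_uminus by (metis diff_conv_add_uminus)

lemma card_F3_scalars: "card (F3_scalars :: 'a set) = 3"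
proof -
  have "(-1::'a) \<noteq> 1"
  proof
    assume "(-1::'a) = 1"
    then have "(2::'a) = 0"
      by (metis one_add_one add.right_inverse)
    moreover have "(3::'a) = 2 + 1"
      by simp
    ultimately have "(3::'a) = 1"
      by simp
    then show False
      using three_eq_zero by simp
  qed
  then show ?thesis
    by (simp add: F3_scalars_char3_eq)
qed

lemma F3_scalars_power_3_power: "c \<in> F3_scalars \<Longrightarrow> (c::'a) ^ 3 ^ k = c"
  by (induction k) (simp_all add: F3_scalars_iff power_mult)

lemma f3_subspace_diff:
  assumes "f3_subspace V" "x \<in> V" "y \<in> V"
  shows "x - (y::'a) \<in> V"
proof -
  have "(-1) * y \<in> V"
    using assms by (intro f3_subspace_scale) (simp_all add: char3 F3_scalars_char3_eq)
  then have "x + (-1) * y \<in> V"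
    using assms unfolding f3_subspace_def by blast
  then show ?thesis
    by simp
qed

lemma f3_subspace_f3_span:
  assumes "finite S"
  shows "f3_subspace (f3_span (S::'a set))"
  unfolding f3_subspace_def
proof (intro conjI ballI)
  show "0 \<in> f3_span S"
    using f3_span_sumI[OF assms, of "\<lambda>_. 0"] by (simp add: F3_scalars_eq)
  fix x y
  assume "x \<in> f3_span S" "y \<in> f3_span S"
  obtain c where x: "x = (\<Sum>s\<in>S. c s * s)" and c: "\<forall>s. c s \<in> F3_scalars"
    using assms \<open>x \<in> f3_span S\<close> by (rule f3_span_sumE)
  obtain d where y: "y = (\<Sum>s\<in>S. d s * s)" and d: "\<forall>s. d s \<in> F3_scalars"
    using assms \<open>y \<in> f3_span S\<close> by (rule f3_span_sumE)
  have "x + y = (\<Sum>s\<in>S. (c s + d s) * s)"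
    unfolding x y by (simp add: distrib_right sum.distrib)
  also have "\<dots> \<in> f3_span S"
    using c d by (intro f3_span_sumI[OF assms]) (simp add: F3_scalars_add char3)
  finally show "x + y \<in> f3_span S" .
qed

lemma f3_indep_insert:
  assumes "finite B" "v \<notin> B"
  shows "f3_indep (insert v B) \<longleftrightarrow> f3_indep B \<and> v \<notin> f3_span (B::'a set)"
proof
  assume indep: "f3_indep (insert v B)"
  have "v \<notin> f3_span B"
  proof
    assume "v \<in> f3_span B"
    then obtain c where v: "v = (\<Sum>s\<in>B. c s * s)" and c: "\<forall>s. c s \<in> F3_scalars"
      using assms(1) by (blast elim: f3_span_sumE)
    define d where "d = c(v := -1)"
    have "(\<Sum>s\<in>B. d s * s) = (\<Sum>s\<in>B. c s * s)"
      using assms(2) unfolding d_def by (intro sum.cong) auto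
    then have "(\<Sum>s\<in>insert v B. d s * s) = 0"
      using assms by (simp add: d_def flip: v)
    moreover have "\<forall>s. d s \<in> F3_scalars"
      using c by (simp add: d_def char3 F3_scalars_char3_eq)
    ultimately have "d v = 0"
      using indep assms(1) by (simp add: f3_indep_finite_iff)
    then show False
      by (simp add: d_def)
  qed
  then show "f3_indep B \<and> v \<notin> f3_span B"
    using indep f3_indep_subset by blast
next
  assume "f3_indep B \<and> v \<notin> f3_span B"
  then have indep: "f3_indep B" and v: "v \<notin> f3_span B"
    by simp_all
  show "f3_indep (insert v B)"
    unfolding f3_indep_finite_iff[OF finite.insertI[OF assms(1)]]
  proof (intro allI impI)
    fix c
    assume "(\<forall>s. c s \<in> F3_scalars) \<and> (\<Sum>s\<in>insert v B. c s * s) = 0"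
    then have c: "\<forall>s. c s \<in> F3_scalars" and sum: "c v * v = - (\<Sum>s\<in>B. c s * s)"
      using assms by (simp_all add: eq_neg_iff_add_eq_0)
    have "c v = 0"
    proof (rule ccontr)
      assume "c v \<noteq> 0"
      then have "v = inverse (c v) * (c v * v)"
        by simp
      also have "\<dots> = (\<Sum>s\<in>B. (- inverse (c v) * c s) * s)"
        unfolding sum by (simp add: sum_distrib_left sum_negf mult.assoc)
      also have "\<dots> \<in> f3_span B"
        using c assms(1) by (intro f3_span_sumI allI F3_scalars_mult F3_scalars_uminus F3_scalars_inverse) auto
      finally show False
        using v by contradiction
    qed
    then have "\<forall>s\<in>B. c s = 0"
      using indep c sum assms(1) by (simp add: f3_indep_finite_iff)
    then show "\<forall>s\<in>insert v B. c s = 0"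
      using \<open>c v = 0\<close> by simp
  qed
qed

lemma f3_span_insert_coeffs_unique:
  assumes "finite B" "v \<notin> f3_span B"
    and "c \<in> F3_scalars" "c' \<in> F3_scalars" "x \<in> f3_span B" "x' \<in> f3_span B"
    and "c * v + x = c' * v + (x'::'a)"
  shows "c = c' \<and> x = x'"
proof (cases "c = c'")
  case False
  have "(c - c') * v = x' - x"
    using assms(7) by (simp add: algebra_simps)
  moreover have "v = inverse (c - c') * ((c - c') * v)"
    using False by simp
  ultimately have "v = inverse (c - c') * (x' - x)"
    by simp
  also have "\<dots> \<in> f3_span B"
    using assms(1,3-6) f3_subspace_f3_span[OF assms(1)]
    by (intro f3_subspace_scale F3_scalars_inverse F3_scalars_diff f3_subspace_diff)
  finally show ?thesis
    using assms(2) by contradiction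
qed (use assms(7) in simp)

lemma card_f3_span:
  assumes "finite B" "f3_indep B"
  shows "card (f3_span (B::'a set)) = 3 ^ card B"
  using assms
proof (induction B rule: finite_induct)
  case empty
  then show ?case
    by (simp add: f3_span_empty)
next
  case (insert v B)
  then have indep: "f3_indep B" and v: "v \<notin> f3_span B"
    by (simp_all add: f3_indep_insert)
  let ?f = "\<lambda>(c, x). c * v + x"
  have span: "f3_span (insert v B) = ?f ` (F3_scalars \<times> f3_span B)"
    using insert.hyps by (auto simp: f3_span_insert)
  have "inj_on ?f (F3_scalars \<times> f3_span B)"
    using f3_span_insert_coeffs_unique[OF insert.hyps(1) v] by (auto intro: inj_onI)
  then have "card (f3_span (insert v B)) = card ((F3_scalars :: 'a set) \<times> f3_span B)"
    unfolding span by (rule card_image)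
  also have "\<dots> = 3 * 3 ^ card B"
    using insert.IH indep by (simp add: card_cartesian_product card_F3_scalars)
  finally show ?case
    using insert.hyps by simp
qed

lemma f3_basis_extend:
  assumes "finite V" "f3_subspace V" "B0 \<subseteq> V" "f3_indep B0"
  shows "\<exists>B. B0 \<subseteq> B \<and> B \<subseteq> V \<and> f3_indep B \<and> f3_span B = (V::'a set)"
  using assms(3,4)
proof (induction "card V - card B0" arbitrary: B0 rule: less_induct)
  case less
  have "finite B0"
    using less.prems assms(1) finite_subset by blast
  show ?case
  proof (cases "f3_span B0 = V")
    case True
    then show ?thesis
      using less.prems by blast
  next
    case False
    moreover have "f3_span B0 \<subseteq> V"
      using less.prems assms(2) \<open>finite B0\<close> by (intro f3_span_subset)
    ultimately obtain v where v: "v \<in> V" "v \<notin> f3_span B0"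
      by blast
    then have "v \<notin> B0"
      using subset_f3_span[OF \<open>finite B0\<close>] by blast
    then have "f3_indep (insert v B0)"
      using f3_indep_insert[OF \<open>finite B0\<close>] less.prems v by blast
    moreover have "insert v B0 \<subseteq> V"
      using less.prems v by blast
    moreover have "card V - card (insert v B0) < card V - card B0"
      using \<open>v \<notin> B0\<close> \<open>finite B0\<close> card_mono[OF assms(1) \<open>insert v B0 \<subseteq> V\<close>] by simp
    ultimately obtain B where "insert v B0 \<subseteq> B" "B \<subseteq> V" "f3_indep B" "f3_span B = V"
      using less.hyps by blast
    then show ?thesis
      by blast
  qed
qed

lemma f3_dim_eqI:
  assumes "finite V" "f3_subspace V" "card V = 3 ^ k"
  shows "f3_dim (V::'a set) = k"
  unfolding f3_dim_def
proof (rule the_equality)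
  obtain B where B: "B \<subseteq> V" "f3_indep B" "f3_span B = V"
    using f3_basis_extend[OF assms(1,2) empty_subsetI f3_indep_empty] by blast
  moreover have "finite B"
    using B(1) assms(1) finite_subset by blast
  moreover have "card B = k"
    using card_f3_span[OF \<open>finite B\<close> B(2)] B(3) assms(3) by simp
  ultimately show "\<exists>B. finite B \<and> B \<subseteq> V \<and> f3_indep B \<and> f3_span B = V \<and> card B = k"
    by blast
next
  fix k'
  assume "\<exists>B. finite B \<and> B \<subseteq> V \<and> f3_indep B \<and> f3_span B = V \<and> card B = k'"
  then show "k' = k"
    using card_f3_span assms(3) by auto
qed

lemma f3_trace_add: "f3_trace m (x + y) = f3_trace m x + f3_trace m (y::'a)"
  by (simp add: f3_trace_def add_power_3_power sum.distrib)

lemma f3_trace_diff: "f3_trace m (x - y) = f3_trace m x - f3_trace m (y::'a)"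
  using f3_trace_add[of m "x - y" y] by (simp add: algebra_simps)

lemma f3_subspace_trace_perp: "f3_subspace (trace_perp m (S::'a set))"
  by (simp add: f3_subspace_def trace_perp_def distrib_right f3_trace_add)

lemma trace_perp_f3_span:
  assumes "finite S"
  shows "trace_perp m (f3_span S) = trace_perp m (S::'a set)"
proof
  show "trace_perp m (f3_span S) \<subseteq> trace_perp m S"
    using subset_f3_span[OF assms] unfolding trace_perp_def by blast
  show "trace_perp m S \<subseteq> trace_perp m (f3_span S)"
  proof
    fix x
    assume "x \<in> trace_perp m S"
    moreover have "f3_subspace {s. f3_trace m (x * s) = 0}"
      by (simp add: f3_subspace_def distrib_left f3_trace_add)
    ultimately have "f3_span S \<subseteq> {s. f3_trace m (x * s) = 0}"
      using assms by (intro f3_span_subset) (auto simp: trace_perp_def)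
    then show "x \<in> trace_perp m (f3_span S)"
      by (auto simp: trace_perp_def)
  qed
qed

end

section \<open>The trace form of a field with \<open>3^m\<close> elements\<close>

lemma CHAR_eq_3_of_card:
  assumes "card (UNIV :: 'a::{field,finite} set) = 3 ^ k"
  shows "CHAR('a) = 3"
proof -
  have "prime CHAR('a)"
    by (intro prime_CHAR_semidom finite_imp_CHAR_pos) simp
  moreover have "CHAR('a) dvd 3 ^ k"
    using CHAR_dvd_CARD[where 'a='a] assms by simp
  moreover have "prime (3::nat)"
    by simp
  ultimately show ?thesis
    by (metis prime_dvd_power primes_dvd_imp_eq)
qed

lemma power_card_UNIV_eq_self:
  fixes x :: "'a::{field,finite}"
  shows "x ^ card (UNIV :: 'a set) = x"
proof (cases "x = 0")
  case True
  then show ?thesis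
    by (simp add: power_0_left)
next
  case False
  define U where "U = UNIV - {0 :: 'a}"
  define k where "k = card U"
  have "(\<Prod>y\<in>U. y) = (\<Prod>y\<in>U. x * y)"
    unfolding U_def
    by (rule prod.reindex_bij_witness[of _ "\<lambda>y. x * y" "\<lambda>y. y / x"]) (use False in simp_all)
  also have "\<dots> = x ^ k * (\<Prod>y\<in>U. y)"
    by (simp add: prod.distrib k_def)
  finally have "x ^ k = 1"
    by (simp add: U_def)
  moreover have "card (UNIV :: 'a set) = Suc k"
    using card_Suc_Diff1[of UNIV "0::'a"] by (simp add: k_def U_def)
  ultimately show ?thesis
    by simp
qed

lemma card_UNIV_eq_card_range_mult_card_kernel:
  fixes f :: "'a::{ab_group_add,finite} \<Rightarrow> 'b::ab_group_add"
  assumes add: "\<And>x y. f (x + y) = f x + f y"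
  shows "card (UNIV :: 'a set) = card (range f) * card {x. f x = 0}"
proof -
  have diff: "f (x - y) = f x - f y" for x y
    using add[of "x - y" y] by (simp add: algebra_simps)
  have fibre: "{x. f x = f x0} = (\<lambda>k. x0 + k) ` {x. f x = 0}" for x0
  proof (intro equalityI subsetI)
    fix x
    assume "x \<in> {x. f x = f x0}"
    then have "x - x0 \<in> {x. f x = 0}" "x = x0 + (x - x0)"
      by (simp_all add: diff)
    then show "x \<in> (\<lambda>k. x0 + k) ` {x. f x = 0}"
      by blast
  qed (auto simp: add diff[of 0 0, simplified])
  have "card (UNIV :: 'a set) = card (\<Union>y\<in>range f. {x. f x = y})"
    by (rule arg_cong[where f = card]) blast
  also have "\<dots> = (\<Sum>y\<in>range f. card {x. f x = y})"
    by (rule card_UN_disjoint) auto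
  also have "\<dots> = (\<Sum>y\<in>range f. card {x. f x = 0})"
  proof (intro sum.cong refl)
    fix y
    assume "y \<in> range f"
    then obtain x0 where "y = f x0"
      by blast
    moreover have "inj_on (\<lambda>k. x0 + k) {x. f x = 0}"
      by (simp add: inj_on_def)
    ultimately show "card {x. f x = y} = card {x. f x = 0}"
      by (simp add: fibre card_image)
  qed
  finally show ?thesis
    by simp
qed

context
  fixes m :: nat
  assumes card_UNIV: "card (UNIV :: 'a::{field,finite} set) = 3 ^ m"
begin

private lemma char3: "CHAR('a) = 3"
  using card_UNIV by (rule CHAR_eq_3_of_card)

lemma card_UNIV_exponent_pos: "m > 0"
proof (rule ccontr)
  assume "\<not> m > 0"
  then have "card (UNIV :: 'a set) = 1"
    by (simp add: card_UNIV)
  moreover have "card {0, 1::'a} \<le> card (UNIV :: 'a set)"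
    by (rule card_mono) simp_all
  ultimately show False
    by simp
qed

lemma f3_trace_power_3: "f3_trace m ((x::'a) ^ 3) = f3_trace m x"
proof -
  define f where "f i = x ^ 3 ^ i" for i
  have "f3_trace m (x ^ 3) = (\<Sum>i<m. f (Suc i))"
    unfolding f3_trace_def f_def by (simp add: power_mult[symmetric] mult.commute)
  also have "\<dots> = (\<Sum>i<m. f i)"
    using sum.lessThan_Suc_shift[of f m] power_card_UNIV_eq_self[of x, unfolded card_UNIV]
    by (simp add: f_def)
  finally show ?thesis
    by (simp add: f3_trace_def f_def)
qed

lemma f3_trace_power_3_power: "f3_trace m ((x::'a) ^ 3 ^ k) = f3_trace m x"
proof (induction k)
  case (Suc k)
  have "x ^ 3 ^ Suc k = (x ^ 3 ^ k) ^ 3"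
    by (metis power_Suc2 power_mult)
  then show ?case
    using Suc.IH by (simp only: f3_trace_power_3)
qed simp

lemma f3_trace_in_F3_scalars: "f3_trace m (x::'a) \<in> F3_scalars"
proof -
  have "f3_trace m x ^ 3 = f3_trace m (x ^ 3)"
    using sum_power_3_power[OF char3, of "\<lambda>i. x ^ 3 ^ i" "{..<m}" 1]
    by (simp add: f3_trace_def power_mult[symmetric] mult.commute)
  then show ?thesis
    by (simp add: F3_scalars_iff[OF char3] f3_trace_power_3)
qed

lemma f3_trace_not_identically_zero: "\<exists>x::'a. f3_trace m x \<noteq> 0"
proof -
  define P :: "'a poly" where "P = (\<Sum>i<m. monom 1 (3 ^ i))"
  have "coeff P (3 ^ (m - 1)) = (\<Sum>i<m. if i = m - 1 then 1 else 0)"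
    unfolding P_def coeff_sum coeff_monom by (intro sum.cong) simp_all
  also have "\<dots> = 1"
    using card_UNIV_exponent_pos by simp
  finally have "P \<noteq> 0"
    by auto
  have "degree P \<le> 3 ^ (m - 1)"
    unfolding P_def by (intro degree_sum_le) (auto simp: degree_monom_eq)
  also have "(3::nat) ^ (m - 1) < 3 ^ m"
    using card_UNIV_exponent_pos by (intro power_strict_increasing) simp_all
  finally have "card {x. poly P x = 0} < card (UNIV :: 'a set)"
    using card_poly_roots_bound[OF \<open>P \<noteq> 0\<close>] card_UNIV by linarith
  then obtain x where "poly P x \<noteq> 0"
    by force
  moreover have "poly P x = f3_trace m x"
    by (simp add: P_def f3_trace_def poly_sum poly_monom)
  ultimately show ?thesis
    by auto
qed

lemma range_f3_trace: "range (f3_trace m :: 'a \<Rightarrow> 'a) = F3_scalars"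
proof
  show "range (f3_trace m :: 'a \<Rightarrow> 'a) \<subseteq> F3_scalars"
    using f3_trace_in_F3_scalars by blast
  obtain x :: 'a where x: "f3_trace m x \<noteq> 0"
    using f3_trace_not_identically_zero by blast
  then have "f3_trace m x \<in> {1, -1}"
    using f3_trace_in_F3_scalars[of x] by (simp add: F3_scalars_char3_eq[OF char3])
  then have "(F3_scalars :: 'a set) = {0, f3_trace m x, - f3_trace m x}"
    by (auto simp: F3_scalars_char3_eq[OF char3])
  also have "\<dots> = f3_trace m ` {0, x, - x}"
    using f3_trace_diff[OF char3, of m 0 x] by simp
  also have "\<dots> \<subseteq> range (f3_trace m)"
    by blast
  finally show "F3_scalars \<subseteq> range (f3_trace m :: 'a \<Rightarrow> 'a)" .
qed

lemma card_f3_trace_kernel: "3 * card {x::'a. f3_trace m x = 0} = 3 ^ m"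
  using card_UNIV_eq_card_range_mult_card_kernel[of "f3_trace m :: 'a \<Rightarrow> 'a"]
  by (simp add: f3_trace_add[OF char3] range_f3_trace card_F3_scalars[OF char3] card_UNIV)

lemma f3_trace_nondegenerate:
  assumes "(x::'a) \<noteq> 0"
  shows "\<exists>z. f3_trace m (x * z) \<noteq> 0"
proof -
  obtain w :: 'a where "f3_trace m w \<noteq> 0"
    using f3_trace_not_identically_zero by blast
  then show ?thesis
    using assms by (intro exI[of _ "w / x"]) simp
qed

lemma trace_perp_UNIV: "trace_perp m (UNIV :: 'a set) = {0}"
  using f3_trace_nondegenerate by (auto simp: trace_perp_def)

lemma trace_coordinates_bij:
  assumes "f3_indep B" "f3_span B = (UNIV :: 'a set)"
  shows "bij_betw (\<lambda>x. restrict (\<lambda>b. f3_trace m (x * b)) B) UNIV (B \<rightarrow>\<^sub>E F3_scalars)"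
proof -
  let ?c = "\<lambda>x. restrict (\<lambda>b. f3_trace m (x * b)) B"
  have "inj ?c"
  proof (rule injI)
    fix x y
    assume eq: "?c x = ?c y"
    have "f3_trace m ((x - y) * b) = 0" if "b \<in> B" for b
      using fun_cong[OF eq, of b] that by (simp add: left_diff_distrib f3_trace_diff[OF char3])
    then have "x - y \<in> trace_perp m B"
      by (simp add: trace_perp_def)
    then have "x - y \<in> trace_perp m (f3_span B)"
      by (simp add: trace_perp_f3_span[OF char3 finite])
    then show "x = y"
      by (simp add: assms(2) trace_perp_UNIV)
  qed
  moreover have "range ?c = B \<rightarrow>\<^sub>E F3_scalars"
  proof (rule card_subset_eq)
    show "range ?c \<subseteq> B \<rightarrow>\<^sub>E F3_scalars"
      by (auto simp: restrict_PiE_iff f3_trace_in_F3_scalars)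
    have "card (range ?c) = card (f3_span B)"
      using \<open>inj ?c\<close> by (simp add: card_image assms(2))
    also have "\<dots> = card (B \<rightarrow>\<^sub>E (F3_scalars :: 'a set))"
      using assms(1) by (simp add: card_PiE card_F3_scalars[OF char3] card_f3_span[OF char3 finite])
    finally show "card (range ?c) = card (B \<rightarrow>\<^sub>E (F3_scalars :: 'a set))" .
  qed (simp add: finite_PiE)
  ultimately show ?thesis
    by (simp add: bij_betw_def)
qed

text \<open>
  In trace coordinates with respect to a basis \<open>B\<close> extending \<open>S\<close>, \<open>trace_perp m S\<close> consists
  of the points whose coordinates vanish on \<open>S\<close>.
\<close>
lemma card_trace_perp:
  assumes "f3_indep (S :: 'a set)"
  shows "card S \<le> m \<and> card (trace_perp m S) = 3 ^ (m - card S)"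
proof -
  obtain B where B: "S \<subseteq> B" "f3_indep B" "f3_span B = UNIV"
    using f3_basis_extend[OF char3 finite_UNIV f3_subspace_UNIV subset_UNIV assms] by blast
  have "card B = m"
    using card_f3_span[OF char3 _ B(2)] B(3) card_UNIV by simp
  let ?c = "\<lambda>x. restrict (\<lambda>b. f3_trace m (x * b)) B"
  define E where "E = PiE B (\<lambda>b. if b \<in> S then {0} else (F3_scalars :: 'a set))"
  have perp: "trace_perp m S = ?c -` E"
  proof (intro equalityI subsetI)
    fix x
    assume "x \<in> trace_perp m S"
    then show "x \<in> ?c -` E"
      using f3_trace_in_F3_scalars by (auto simp: trace_perp_def E_def restrict_PiE_iff)
  next
    fix x
    assume "x \<in> ?c -` E"
    have "f3_trace m (x * b) = 0" if "b \<in> S" for b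
    proof -
      have "b \<in> B"
        using that B(1) by blast
      then have "?c x b \<in> (if b \<in> S then {0} else F3_scalars)"
        using \<open>x \<in> ?c -` E\<close> unfolding E_def by (blast intro: PiE_mem)
      then show ?thesis
        using that \<open>b \<in> B\<close> by simp
    qed
    then show "x \<in> trace_perp m S"
      by (simp add: trace_perp_def)
  qed
  note bij = trace_coordinates_bij[OF B(2,3)]
  have "E \<subseteq> B \<rightarrow>\<^sub>E F3_scalars"
    unfolding E_def by (intro PiE_mono) (auto simp: F3_scalars_eq)
  then have "?c ` (?c -` E) = E"
    using bij_betw_imp_surj_on[OF bij] by (simp add: Int_absorb2)
  then have "bij_betw ?c (?c -` E) E"
    using bij_betw_subset[OF bij subset_UNIV] by blast
  then have "card (trace_perp m S) = card E"
    unfolding perp by (rule bij_betw_same_card)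
  also have "\<dots> = (\<Prod>b\<in>B. if b \<in> S then 1 else 3)"
    unfolding E_def by (simp add: card_PiE card_F3_scalars[OF char3] if_distrib cong: if_cong)
  also have "\<dots> = 3 ^ card (B - S)"
    by (simp add: prod.If_cases Diff_eq)
  also have "card (B - S) = m - card S"
    using B(1) \<open>card B = m\<close> by (simp add: card_Diff_subset finite_subset)
  finally show ?thesis
    using card_mono[OF finite B(1)] \<open>card B = m\<close> by simp
qed

lemma f3_dim_trace_perp_add_f3_dim_f3_span:
  "f3_dim (trace_perp m (S :: 'a set)) + f3_dim (f3_span S) = m"
proof -
  obtain B where B: "f3_indep B" "f3_span B = f3_span S"
    using f3_basis_extend[OF char3 finite f3_subspace_f3_span[OF char3 finite] empty_subsetI f3_indep_empty]
    by blast
  have "trace_perp m S = trace_perp m B"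
    by (metis B(2) finite trace_perp_f3_span[OF char3])
  then have "f3_dim (trace_perp m S) = m - card B"
    using card_trace_perp[OF B(1)]
    by (intro f3_dim_eqI[OF char3 finite] f3_subspace_trace_perp[OF char3]) simp
  moreover have "f3_dim (f3_span S) = card B"
    using B card_f3_span[OF char3 finite B(1)]
    by (metis f3_dim_eqI[OF char3 finite] f3_subspace_f3_span[OF char3 finite])
  ultimately show ?thesis
    using card_trace_perp[OF B(1)] by simp
qed

end

section \<open>The image of \<open>\<alpha> \<mapsto> \<alpha> - \<alpha>^(3^(n+1))\<close>\<close>

lemma INT_mult_image_eq:
  assumes "0 \<notin> T"
  shows "(\<Inter>t\<in>T. (\<lambda>a. t * a) ` A) = {x::'a::field. \<forall>t\<in>T. x * inverse t \<in> A}"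
proof (intro equalityI subsetI)
  fix x
  assume "x \<in> (\<Inter>t\<in>T. (\<lambda>a. t * a) ` A)"
  then show "x \<in> {x. \<forall>t\<in>T. x * inverse t \<in> A}"
    using assms by (fastforce simp: field_simps)
next
  fix x
  assume x: "x \<in> {x. \<forall>t\<in>T. x * inverse t \<in> A}"
  have "x \<in> (\<lambda>a. t * a) ` A" if "t \<in> T" for t
  proof
    show "x = t * (x * inverse t)"
      using that assms by (auto simp: field_simps)
  qed (use x that in simp)
  then show "x \<in> (\<Inter>t\<in>T. (\<lambda>a. t * a) ` A)"
    by blast
qed

context
  fixes n :: nat
  assumes card_UNIV: "card (UNIV :: 'a::{field,finite} set) = 3 ^ (2 * n + 1)"
begin

lemma power_3_power_Suc_eq_self_iff: "(x::'a) ^ 3 ^ (n + 1) = x \<longleftrightarrow> x \<in> F3_scalars"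
proof
  assume fixed: "x ^ 3 ^ (n + 1) = x"
  have exp: "(3::nat) ^ (n + 1) * 3 ^ (n + 1) = 3 ^ (2 * n + 1) * 3"
    by (simp flip: power_add power_Suc2)
  have "x ^ 3 = (x ^ 3 ^ (2 * n + 1)) ^ 3"
    using power_card_UNIV_eq_self[of x, unfolded card_UNIV] by simp
  also have "\<dots> = x ^ (3 ^ (n + 1) * 3 ^ (n + 1))"
    unfolding exp power_mult ..
  also have "\<dots> = x"
    by (simp only: power_mult fixed)
  finally show "x \<in> F3_scalars"
    using CHAR_eq_3_of_card[OF card_UNIV] by (simp add: F3_scalars_iff)
qed (rule F3_scalars_power_3_power[OF CHAR_eq_3_of_card[OF card_UNIV]])

lemma range_sub_power_eq_f3_trace_kernel:
  "range (\<lambda>\<alpha>::'a. \<alpha> - \<alpha> ^ 3 ^ (n + 1)) = {x. f3_trace (2 * n + 1) x = 0}"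
proof (rule card_subset_eq)
  let ?\<phi> = "\<lambda>\<alpha>::'a. \<alpha> - \<alpha> ^ 3 ^ (n + 1)"
  have char3: "CHAR('a) = 3"
    using card_UNIV by (rule CHAR_eq_3_of_card)
  have "f3_trace (2 * n + 1) (?\<phi> \<alpha>) = 0" for \<alpha>
    unfolding f3_trace_diff[OF char3] f3_trace_power_3_power[OF card_UNIV] by simp
  then show "range ?\<phi> \<subseteq> {x. f3_trace (2 * n + 1) x = 0}"
    by blast
  have "?\<phi> (x + y) = ?\<phi> x + ?\<phi> y" for x y
    unfolding add_power_3_power[OF char3] by simp
  moreover have "?\<phi> \<alpha> = 0 \<longleftrightarrow> \<alpha> \<in> F3_scalars" for \<alpha>
    unfolding right_minus_eq eq_commute[of \<alpha> "\<alpha> ^ 3 ^ (n + 1)"] by (rule power_3_power_Suc_eq_self_iff)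
  then have "{\<alpha>. ?\<phi> \<alpha> = 0} = F3_scalars"
    by blast
  ultimately have "3 ^ (2 * n + 1) = card (range ?\<phi>) * 3"
    using card_UNIV_eq_card_range_mult_card_kernel[of ?\<phi>] card_UNIV card_F3_scalars[OF char3]
    by simp
  then show "card (range ?\<phi>) = card {x::'a. f3_trace (2 * n + 1) x = 0}"
    using card_f3_trace_kernel[OF card_UNIV] by simp
qed simp

end

theorem lemma4p2:
  fixes n :: nat and T :: "'a::{field, finite} set"
  assumes card_q: "card (UNIV :: 'a set) = 3 ^ (2 * n + 1)"
    and T_units: "T \<subseteq> UNIV - {0}"
  defines "A \<equiv> {\<alpha> - \<alpha> ^ (3 ^ (n + 1)) | \<alpha>. True}"
  shows "f3_dim (\<Inter>t\<in>T. (\<lambda>a. t * a) ` A) + f3_dim (f3_span (inverse ` T)) = 2 * n + 1"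
proof -
  have "A = {x. f3_trace (2 * n + 1) x = 0}"
    unfolding A_def using range_sub_power_eq_f3_trace_kernel[OF card_q]
    by (simp add: full_SetCompr_eq)
  moreover have "0 \<notin> T"
    using T_units by blast
  ultimately have "(\<Inter>t\<in>T. (\<lambda>a. t * a) ` A) = trace_perp (2 * n + 1) (inverse ` T)"
    by (simp add: INT_mult_image_eq trace_perp_def)
  then show ?thesis
    using f3_dim_trace_perp_add_f3_dim_f3_span[OF card_q] by simp
qed

end
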